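(* Let $A\in\mathbb{R}^{p\times n}$ with $A\mathbf{1}=\mathbf{0}$, let $A=U\Sigma V$ be its compact SVD with singular values in descending order ($V$ with orthonormal rows), and let $K$ be an integer with $2\le K\le\operatorname{rank}(A)+1$; let $V_{1:K-1}$ be the first $K-1$ rows of $V$ (the solution of PCA $\min_{D,X}\|A-DX\|_F^2$ s.t. $XX^T=I$, $X\in\mathbb{R}^{(K-1)\times n}$). Put $\beta=-\min_{i,j}(A^TA)_{ij}$, $\tilde A=\begin{bmatrix}\sqrt\beta\,\mathbf{1}^T\\ A\end{bmatrix}$, $W=\tilde A^T\tilde A$, $L=\operatorname{diag}(W\mathbf{1})-W$. Let $H\in\mathbb{R}^{K\times n}$ be a normalized-indicator solution of K-means $\min_{D,X}\|A-DX\|_F^2$ s.t. $X\in\mathcal{H}$ (equivalently of ratio cut $\min_X\operatorname{tr}\{XLX^T\}$ s.t. $X\in\mathcal{H}$). If $W$ satisfies the ideal graph condition with respect to $K$ clusters, then there exists $R\in\mathbb{R}^{K\times K}$ with $R^TR=I$ such that $$\begin{bmatrix}\tfrac1{\sqrt n}\mathbf{1}^T\\ V_{1:K-1}\end{bmatrix}=RH.$$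
   Context: $\mathbf{1}$ is the all-ones vector, $\operatorname{diag}(v)$ the diagonal matrix with diagonal $v$. $\mathcal{F}$ is the set of matrices $F\in\{0,1\}^{K\times n}$ each of whose columns has exactly one entry $1$ (clusters nonempty), and $\mathcal{H}=\{(FF^T)^{-1/2}F:F\in\mathcal{F}\}$. Ideal graph condition for $W$ with respect to $K$: the graph on $\{1,\dots,n\}$ with an edge between $i,j$ whenever $W_{ij}>0$ has exactly $K$ connected components. *)

theory Defs
  imports "Jordan_Normal_Form.DL_Rank"
begin

definition fro2 :: "real mat \<Rightarrow> real" where
  "fro2 M = (\<Sum>i<dim_row M. \<Sum>j<dim_col M. (M $$ (i,j))^2)"

definition indicator_mats :: "nat \<Rightarrow> nat \<Rightarrow> real mat set" where
  "indicator_mats K n = {F. F \<in> carrier_mat K n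
     \<and> (\<forall>k<K. \<forall>i<n. F $$ (k,i) = 0 \<or> F $$ (k,i) = 1)
     \<and> (\<forall>i<n. \<exists>!k. k < K \<and> F $$ (k,i) = 1)
     \<and> (\<forall>k<K. \<exists>i<n. F $$ (k,i) = 1)}"

(* \<H> = {(F F^T)^{-1/2} F}; F F^T = diag(cluster sizes), so entry (k,i) is F_ki / sqrt(n_k) *)
definition norm_indicator_mats :: "nat \<Rightarrow> nat \<Rightarrow> real mat set" where
  "norm_indicator_mats K n =
     (\<lambda>F. mat K n (\<lambda>(k,i). F $$ (k,i) / sqrt ((F * transpose_mat F) $$ (k,k)))) ` indicator_mats K n"

definition compact_svd :: "nat \<Rightarrow> nat \<Rightarrow> real mat \<Rightarrow> real mat \<Rightarrow> real mat \<Rightarrow> real mat \<Rightarrow> bool" where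
  "compact_svd p n A U S V \<longleftrightarrow> (\<exists>r.
     U \<in> carrier_mat p r \<and> S \<in> carrier_mat r r \<and> V \<in> carrier_mat r n
     \<and> transpose_mat U * U = 1\<^sub>m r
     \<and> V * transpose_mat V = 1\<^sub>m r
     \<and> (\<forall>i<r. \<forall>j<r. i \<noteq> j \<longrightarrow> S $$ (i,j) = 0)
     \<and> (\<forall>i<r. S $$ (i,i) > 0)
     \<and> (\<forall>i<r. \<forall>j<r. i \<le> j \<longrightarrow> S $$ (i,i) \<ge> S $$ (j,j))
     \<and> A = U * S * V)"

definition beta_of :: "real mat \<Rightarrow> real" where
  "beta_of A = - Min {(transpose_mat A * A) $$ (i,j) | i j. i < dim_col A \<and> j < dim_col A}"

definition A_tilde :: "real mat \<Rightarrow> real mat" where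
  "A_tilde A = mat (dim_row A + 1) (dim_col A)
     (\<lambda>(i,j). if i = 0 then sqrt (beta_of A) else A $$ (i - 1, j))"

definition W_of :: "real mat \<Rightarrow> real mat" where
  "W_of A = transpose_mat (A_tilde A) * A_tilde A"

definition ideal_graph :: "real mat \<Rightarrow> nat \<Rightarrow> bool" where
  "ideal_graph W K \<longleftrightarrow>
     (let n = dim_row W;
          E = {(i,j). i < n \<and> j < n \<and> W $$ (i,j) > 0}
      in card ({0..<n} // ((E \<union> E\<inverse>)\<^sup>*)) = K)"

definition stacked_V :: "nat \<Rightarrow> nat \<Rightarrow> real mat \<Rightarrow> real mat" where
  "stacked_V K n V = mat K n (\<lambda>(i,j). if i = 0 then 1 / sqrt (real n) else V $$ (i - 1, j))"

end

theory Submission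
  imports Defs
begin

text \<open>
  Since \<open>A 1 = 0\<close>, the matrix \<open>W = \<beta> 1 1\<^sup>T + A\<^sup>T A\<close> is entrywise nonnegative with all row
  sums equal to \<open>\<beta> n\<close>. Hence \<open>x\<^sup>T W x \<le> \<beta> n \<parallel>x\<parallel>\<^sup>2\<close>, with equality exactly for the vectors that
  are constant on the connected components of the graph of \<open>W\<close>.

  For a normalized cluster indicator \<open>h\<^sub>k\<close> one has \<open>h\<^sub>k\<^sup>T W h\<^sub>k = \<parallel>A h\<^sub>k\<parallel>\<^sup>2 + \<beta> n\<^sub>k\<close>, and K-means
  maximizes \<open>\<Sum>\<^sub>k \<parallel>A h\<^sub>k\<parallel>\<^sup>2\<close>. The \<open>K\<close> components attain \<open>h\<^sub>k\<^sup>T W h\<^sub>k = \<beta> n\<close> for every cluster,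
  so an optimal clustering must attain it too, and therefore its clusters are the components.

  A clusterwise constant \<open>y \<noteq> 0\<close> with \<open>1\<^sup>T y = 0\<close> satisfies \<open>\<parallel>A y\<parallel>\<^sup>2 = \<beta> n \<parallel>y\<parallel>\<^sup>2\<close>, while
  every right singular vector \<open>v\<^sub>b\<close> has \<open>\<parallel>A v\<^sub>b\<parallel>\<^sup>2 = \<sigma>\<^sub>b\<^sup>2 \<le> \<beta> n\<close>. Choosing \<open>y\<close> orthogonal to the first
  \<open>K - 2\<close> of them forces \<open>\<sigma>\<^sub>b\<^sup>2 = \<beta> n\<close> for the first \<open>K - 1\<close> singular values. These \<open>v\<^sub>b\<close> then
  attain the bound as well and are constant on the clusters; together with \<open>1/\<surd>n\<close> they form an
  orthonormal basis of the row space of \<open>H\<close>.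
\<close>

lemma sum_le_bound_eq:
  fixes f :: "nat \<Rightarrow> real"
  assumes le: "\<And>k. k < K \<Longrightarrow> f k \<le> b" and sum: "real K * b \<le> (\<Sum>k<K. f k)" and k: "k < K"
  shows "f k = b"
proof -
  have nonneg: "\<And>k. k \<in> {..<K} \<Longrightarrow> 0 \<le> b - f k" using le by simp
  have "(\<Sum>k<K. b - f k) \<le> 0" using sum by (simp add: sum_subtractf)
  moreover have "0 \<le> (\<Sum>k<K. b - f k)" by (rule sum_nonneg) (rule nonneg)
  ultimately have "(\<Sum>k<K. b - f k) = 0" by linarith
  then have "\<forall>k\<in>{..<K}. b - f k = 0" using sum_nonneg_eq_0_iff[OF finite_lessThan nonneg] by simp
  then show ?thesis using k by simp
qed

lemma homogeneous_system_nontrivial_solution: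
  fixes a :: "nat \<Rightarrow> nat \<Rightarrow> real"
  assumes "finite I" "m < card I"
  shows "\<exists>d. (\<exists>k\<in>I. d k \<noteq> 0) \<and> (\<forall>e<m. (\<Sum>k\<in>I. a e k * d k) = 0)"
  using assms
proof (induction m arbitrary: I a)
  case 0
  then obtain k where "k \<in> I" by fastforce
  then show ?case by (intro exI[of _ "\<lambda>_. 1"]) auto
next
  case (Suc m)
  show ?case
  proof (cases "\<forall>k\<in>I. a m k = 0")
    case True
    from Suc.IH[of I a] Suc.prems obtain d
      where "\<exists>k\<in>I. d k \<noteq> 0" "\<forall>e<m. (\<Sum>k\<in>I. a e k * d k) = 0" by auto
    with True show ?thesis by (auto simp: less_Suc_eq)
  next
    case False
    then obtain k0 where k0: "k0 \<in> I" "a m k0 \<noteq> 0" by blast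
    \<comment> \<open>Gaussian elimination of the unknown \<open>d k0\<close> using equation \<open>m\<close>\<close>
    define I' where "I' = I - {k0}"
    define a' where "a' = (\<lambda>e k. a e k - a e k0 * a m k / a m k0)"
    have "finite I'" "m < card I'" using Suc.prems k0 by (simp_all add: I'_def)
    from Suc.IH[OF this, of a'] obtain d' where
      d': "\<exists>k\<in>I'. d' k \<noteq> 0" "\<forall>e<m. (\<Sum>k\<in>I'. a' e k * d' k) = 0" by auto
    define d where "d = d'(k0 := - (\<Sum>k\<in>I'. a m k * d' k) / a m k0)"
    have split: "(\<Sum>k\<in>I. a e k * d k) = a e k0 * d k0 + (\<Sum>k\<in>I'. a e k * d' k)" for e
    proof -
      have "(\<Sum>k\<in>I. a e k * d k) = a e k0 * d k0 + (\<Sum>k\<in>I'. a e k * d k)"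
        using Suc.prems(1) k0(1) unfolding I'_def by (simp add: sum.remove)
      also have "(\<Sum>k\<in>I'. a e k * d k) = (\<Sum>k\<in>I'. a e k * d' k)"
        by (rule sum.cong) (auto simp: d_def I'_def)
      finally show ?thesis .
    qed
    have "\<forall>e<Suc m. (\<Sum>k\<in>I. a e k * d k) = 0"
    proof (intro allI impI)
      fix e assume e: "e < Suc m"
      show "(\<Sum>k\<in>I. a e k * d k) = 0"
      proof (cases "e = m")
        case True
        then show ?thesis using k0(2) unfolding split by (simp add: d_def)
      next
        case False
        have "(\<Sum>k\<in>I'. a' e k * d' k)
            = (\<Sum>k\<in>I'. a e k * d' k) - a e k0 / a m k0 * (\<Sum>k\<in>I'. a m k * d' k)"
          by (simp add: a'_def algebra_simps sum_subtractf sum_distrib_left sum_divide_distrib)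
        then show ?thesis using d'(2) e False k0(2) unfolding split by (simp add: d_def field_simps)
      qed
    qed
    moreover have "\<exists>k\<in>I. d k \<noteq> 0" using d'(1) by (auto simp: d_def I'_def)
    ultimately show ?thesis by blast
  qed
qed


section \<open>Orthonormal families and regular weight matrices\<close>

definition sqnorm :: "nat \<Rightarrow> (nat \<Rightarrow> real) \<Rightarrow> real" where
  "sqnorm n x = (\<Sum>i<n. (x i)^2)"

definition quad_form :: "nat \<Rightarrow> (nat \<Rightarrow> nat \<Rightarrow> real) \<Rightarrow> (nat \<Rightarrow> real) \<Rightarrow> real" where
  "quad_form n w x = (\<Sum>i<n. \<Sum>j<n. w i j * x i * x j)"

definition orthonormal_rows :: "nat \<Rightarrow> nat \<Rightarrow> (nat \<Rightarrow> nat \<Rightarrow> real) \<Rightarrow> bool" where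
  "orthonormal_rows r n f \<longleftrightarrow>
     (\<forall>a<r. \<forall>b<r. (\<Sum>i<n. f a i * f b i) = (if a = b then 1 else 0))"

lemma orthonormal_rowsD:
  "orthonormal_rows r n f \<Longrightarrow> a < r \<Longrightarrow> b < r \<Longrightarrow>
     (\<Sum>i<n. f a i * f b i) = (if a = b then 1 else 0)"
  unfolding orthonormal_rows_def by blast

lemma orthonormal_rows_sqnorm_combination:
  assumes "orthonormal_rows r n f"
  shows "sqnorm n (\<lambda>i. \<Sum>a<r. c a * f a i) = (\<Sum>a<r. (c a)^2)"
proof -
  have "sqnorm n (\<lambda>i. \<Sum>a<r. c a * f a i) = (\<Sum>i<n. \<Sum>a<r. \<Sum>b<r. c a * c b * (f a i * f b i))"
    by (simp add: sqnorm_def power2_eq_square sum_product algebra_simps)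
  also have "\<dots> = (\<Sum>a<r. \<Sum>b<r. c a * c b * (\<Sum>i<n. f a i * f b i))"
    by (simp add: sum.swap[of _ "{..<n}"] sum.swap[of _ "{..<n}" "{..<r}"] sum_distrib_left)
  also have "\<dots> = (\<Sum>a<r. \<Sum>b<r. c a * c b * (if a = b then 1 else 0))"
    by (simp add: orthonormal_rowsD[OF assms])
  also have "\<dots> = (\<Sum>a<r. (c a)^2)"
    by (simp add: power2_eq_square if_distrib sum.delta cong: if_cong)
  finally show ?thesis .
qed

lemma orthonormal_rows_coefficient:
  assumes "orthonormal_rows r n f" and "b < r"
  shows "(\<Sum>i<n. f b i * (\<Sum>a<r. c a * f a i)) = c b"
proof -
  have "(\<Sum>i<n. f b i * (\<Sum>a<r. c a * f a i)) = (\<Sum>a<r. c a * (\<Sum>i<n. f a i * f b i))"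
    by (simp add: sum_distrib_left sum.swap[of _ "{..<n}"] algebra_simps)
  also have "\<dots> = (\<Sum>a<r. c a * (if a = b then 1 else 0))"
    using assms by (intro sum.cong) (simp_all add: orthonormal_rowsD)
  also have "\<dots> = c b" using assms(2) by (simp add: if_distrib sum.delta cong: if_cong)
  finally show ?thesis .
qed

lemma orthonormal_rows_residual:
  assumes "orthonormal_rows K n h"
  shows "sqnorm n (\<lambda>i. x i - (\<Sum>k<K. d k * h k i)) =
    sqnorm n x - (\<Sum>k<K. (\<Sum>i<n. x i * h k i)^2) + (\<Sum>k<K. (d k - (\<Sum>i<n. x i * h k i))^2)"
proof -
  have comb: "(\<Sum>i<n. (\<Sum>k<K. d k * h k i)^2) = (\<Sum>k<K. (d k)^2)"
    using orthonormal_rows_sqnorm_combination[OF assms] by (simp add: sqnorm_def)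
  have cross: "(\<Sum>i<n. x i * (\<Sum>k<K. d k * h k i)) = (\<Sum>k<K. d k * (\<Sum>i<n. x i * h k i))"
    by (simp add: sum_distrib_left sum.swap[of _ "{..<n}"] algebra_simps)
  have "sqnorm n (\<lambda>i. x i - (\<Sum>k<K. d k * h k i)) = sqnorm n x
      - 2 * (\<Sum>i<n. x i * (\<Sum>k<K. d k * h k i)) + (\<Sum>i<n. (\<Sum>k<K. d k * h k i)^2)"
    by (simp add: sqnorm_def power2_diff sum_subtractf sum.distrib sum_distrib_left algebra_simps)
  also have "\<dots> = sqnorm n x - (\<Sum>k<K. (\<Sum>i<n. x i * h k i)^2) + (\<Sum>k<K. (d k - (\<Sum>i<n. x i * h k i))^2)"
    unfolding comb cross by (simp add: power2_diff sum_subtractf sum.distrib sum_distrib_left algebra_simps)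
  finally show ?thesis .
qed

lemma bessel_inequality:
  assumes "orthonormal_rows r n f"
  shows "(\<Sum>a<r. (\<Sum>i<n. y i * f a i)^2) \<le> sqnorm n y"
proof -
  have "0 \<le> sqnorm n (\<lambda>i. y i - (\<Sum>a<r. (\<Sum>i<n. y i * f a i) * f a i))"
    by (simp add: sqnorm_def sum_nonneg)
  also have "\<dots> = sqnorm n y - (\<Sum>a<r. (\<Sum>i<n. y i * f a i)^2)"
    by (simp add: orthonormal_rows_residual[OF assms])
  finally show ?thesis by simp
qed

locale regular_weights =
  fixes n :: nat and w :: "nat \<Rightarrow> nat \<Rightarrow> real" and c :: real
  assumes symmetric: "\<And>i j. i < n \<Longrightarrow> j < n \<Longrightarrow> w i j = w j i"
    and nonneg: "\<And>i j. i < n \<Longrightarrow> j < n \<Longrightarrow> 0 \<le> w i j"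
    and row_sum: "\<And>i. i < n \<Longrightarrow> (\<Sum>j<n. w i j) = c"
begin

lemma laplacian_form:
  "quad_form n w x = c * sqnorm n x - (\<Sum>i<n. \<Sum>j<n. w i j * (x i - x j)^2) / 2"
proof -
  have left: "(\<Sum>i<n. \<Sum>j<n. w i j * (x i)^2) = c * sqnorm n x"
    by (simp add: sqnorm_def sum_distrib_left sum_distrib_right[symmetric] row_sum mult.commute)
  have "(\<Sum>i<n. \<Sum>j<n. w i j * (x j)^2) = (\<Sum>j<n. \<Sum>i<n. w j i * (x j)^2)"
    by (subst sum.swap) (simp add: symmetric)
  then have right: "(\<Sum>i<n. \<Sum>j<n. w i j * (x j)^2) = c * sqnorm n x"
    using left by simp
  have "(\<Sum>i<n. \<Sum>j<n. w i j * (x i - x j)^2) = (\<Sum>i<n. \<Sum>j<n. w i j * (x i)^2)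
      + (\<Sum>i<n. \<Sum>j<n. w i j * (x j)^2) - 2 * quad_form n w x"
    by (simp add: quad_form_def power2_diff sum_subtractf sum.distrib sum_distrib_left algebra_simps)
  then show ?thesis using left right by linarith
qed

lemma quad_form_le: "quad_form n w x \<le> c * sqnorm n x"
proof -
  have "0 \<le> (\<Sum>i<n. \<Sum>j<n. w i j * (x i - x j)^2)" by (intro sum_nonneg) (simp add: nonneg)
  then show ?thesis using laplacian_form[of x] by simp
qed

lemma quad_form_eq_iff:
  "quad_form n w x = c * sqnorm n x \<longleftrightarrow> (\<forall>i<n. \<forall>j<n. 0 < w i j \<longrightarrow> x i = x j)"
proof -
  have terms_nonneg: "0 \<le> w i j * (x i - x j)^2" if "i \<in> {..<n}" "j \<in> {..<n}" for i j
    using that by (simp add: nonneg)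
  have "quad_form n w x = c * sqnorm n x \<longleftrightarrow> (\<Sum>i<n. \<Sum>j<n. w i j * (x i - x j)^2) = 0"
    using laplacian_form[of x] by auto
  also have "\<dots> \<longleftrightarrow> (\<forall>i\<in>{..<n}. (\<Sum>j<n. w i j * (x i - x j)^2) = 0)"
    by (rule sum_nonneg_eq_0_iff) (auto intro!: sum_nonneg terms_nonneg)
  also have "\<dots> \<longleftrightarrow> (\<forall>i\<in>{..<n}. \<forall>j\<in>{..<n}. w i j * (x i - x j)^2 = 0)"
    by (intro ball_cong refl sum_nonneg_eq_0_iff) (auto intro: terms_nonneg)
  also have "\<dots> \<longleftrightarrow> (\<forall>i<n. \<forall>j<n. 0 < w i j \<longrightarrow> x i = x j)"
  proof -
    have "w i j * (x i - x j)^2 = 0 \<longleftrightarrow> (0 < w i j \<longrightarrow> x i = x j)" if "i < n" "j < n" for i j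
      using nonneg[OF that] by auto
    then show ?thesis by (simp add: Ball_def)
  qed
  finally show ?thesis .
qed

end

definition graph_edges :: "nat \<Rightarrow> (nat \<Rightarrow> nat \<Rightarrow> real) \<Rightarrow> (nat \<times> nat) set" where
  "graph_edges n w = {(i,j). i < n \<and> j < n \<and> 0 < w i j}"

definition same_component :: "nat \<Rightarrow> (nat \<Rightarrow> nat \<Rightarrow> real) \<Rightarrow> (nat \<times> nat) set" where
  "same_component n w = (graph_edges n w \<union> (graph_edges n w)\<inverse>)\<^sup>*"

lemma ideal_graph_iff_components:
  "ideal_graph W K \<longleftrightarrow> card ({0..<dim_row W} // same_component (dim_row W) (\<lambda>i j. W $$ (i,j))) = K"
  by (simp add: ideal_graph_def same_component_def graph_edges_def Let_def)

lemma equiv_same_component: "equiv UNIV (same_component n w)"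
proof -
  have "sym (same_component n w)"
    unfolding same_component_def by (rule sym_rtrancl) (auto simp: sym_def)
  then show ?thesis
    unfolding equiv_def same_component_def by (auto simp: refl_rtrancl trans_rtrancl)
qed

lemma same_component_edge_constant:
  fixes x :: "nat \<Rightarrow> 'a"
  assumes "(i,j) \<in> same_component n w"
    and "\<And>i j. i < n \<Longrightarrow> j < n \<Longrightarrow> 0 < w i j \<Longrightarrow> x i = x j"
  shows "x i = x j"
  using assms(1) unfolding same_component_def
proof (induction rule: rtrancl_induct)
  case (step y z)
  then show ?case using assms(2) by (auto simp: graph_edges_def)
qed simp

section \<open>Clusterings and normalized indicators\<close>

definition is_clustering :: "nat \<Rightarrow> nat \<Rightarrow> (nat \<Rightarrow> nat) \<Rightarrow> bool" where
  "is_clustering n K c \<longleftrightarrow> (\<forall>i<n. c i < K) \<and> (\<forall>k<K. \<exists>i<n. c i = k)"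

definition cluster_size :: "nat \<Rightarrow> (nat \<Rightarrow> nat) \<Rightarrow> nat \<Rightarrow> nat" where
  "cluster_size n c k = card {i. i < n \<and> c i = k}"

definition normalized_indicator :: "nat \<Rightarrow> (nat \<Rightarrow> nat) \<Rightarrow> nat \<Rightarrow> nat \<Rightarrow> real" where
  "normalized_indicator n c k i = (if c i = k then 1 / sqrt (real (cluster_size n c k)) else 0)"

definition normalized_indicator_mat :: "nat \<Rightarrow> nat \<Rightarrow> (nat \<Rightarrow> nat) \<Rightarrow> real mat" where
  "normalized_indicator_mat K n c = mat K n (\<lambda>(k,i). normalized_indicator n c k i)"

definition indicator_mat :: "nat \<Rightarrow> nat \<Rightarrow> (nat \<Rightarrow> nat) \<Rightarrow> real mat" where
  "indicator_mat K n c = mat K n (\<lambda>(k,i). if c i = k then 1 else 0)"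

lemma sum_over_cluster: "(\<Sum>i<n. if c i = k then a else 0) = real (cluster_size n c k) * a"
proof -
  have "(\<Sum>i<n. if c i = k then a else 0) = (\<Sum>i\<in>{..<n} \<inter> {i. c i = k}. a)"
    by (simp add: sum.If_cases)
  also have "{..<n} \<inter> {i. c i = k} = {i. i < n \<and> c i = k}" by auto
  finally show ?thesis by (simp add: cluster_size_def)
qed

lemma cluster_size_pos: "i < n \<Longrightarrow> 0 < cluster_size n c (c i)"
  unfolding cluster_size_def by (subst card_gt_0_iff) auto

lemma sum_cluster_size:
  assumes "is_clustering n K c"
  shows "(\<Sum>k<K. real (cluster_size n c k)) = real n"
proof -
  have "(\<Sum>k<K. real (cluster_size n c k)) = (\<Sum>k<K. \<Sum>i<n. if c i = k then 1 else 0)"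
    by (simp add: sum_over_cluster)
  also have "\<dots> = (\<Sum>i<n. \<Sum>k<K. if c i = k then 1 else 0)" by (rule sum.swap)
  also have "\<dots> = (\<Sum>i<n. 1)"
    using assms by (intro sum.cong) (auto simp: is_clustering_def)
  finally show ?thesis by simp
qed

lemma sum_by_clusters:
  fixes f g :: "nat \<Rightarrow> real"
  assumes "is_clustering n K c"
  shows "(\<Sum>i<n. f (c i) * g i) = (\<Sum>k<K. f k * (\<Sum>i<n. if c i = k then g i else 0))"
proof -
  have "(\<Sum>k<K. f k * (\<Sum>i<n. if c i = k then g i else 0))
      = (\<Sum>k<K. \<Sum>i<n. if c i = k then f k * g i else 0)"
    by (simp add: sum_distrib_left if_distrib cong: if_cong)
  also have "\<dots> = (\<Sum>i<n. \<Sum>k<K. if c i = k then f k * g i else 0)" by (rule sum.swap)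
  also have "\<dots> = (\<Sum>i<n. f (c i) * g i)"
  proof (intro sum.cong refl)
    fix i assume "i \<in> {..<n}"
    then have "c i \<in> {..<K}" using assms by (simp add: is_clustering_def)
    then show "(\<Sum>k<K. if c i = k then f k * g i else 0) = f (c i) * g i"
      by (simp add: sum.delta[OF finite_lessThan, of "c i" "\<lambda>k. f k * g i", unfolded eq_commute[of "c i"]]
          eq_commute[of _ "c i"])
  qed
  finally show ?thesis by simp
qed

lemma normalized_indicator_orthonormal:
  assumes "is_clustering n K c"
  shows "orthonormal_rows K n (normalized_indicator n c)"
  unfolding orthonormal_rows_def
proof (intro allI impI)
  fix k l assume kl: "k < K" "l < K"
  show "(\<Sum>i<n. normalized_indicator n c k i * normalized_indicator n c l i) = (if k = l then 1 else 0)"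
  proof (cases "k = l")
    case True
    obtain i where "i < n" "c i = k" using assms kl by (auto simp: is_clustering_def)
    then have pos: "0 < cluster_size n c k" using cluster_size_pos by blast
    have "(\<Sum>i<n. normalized_indicator n c k i * normalized_indicator n c l i)
        = (\<Sum>i<n. if c i = k then 1 / real (cluster_size n c k) else 0)"
      using True by (intro sum.cong) (auto simp: normalized_indicator_def)
    also have "\<dots> = 1" using pos by (simp add: sum_over_cluster)
    finally show ?thesis using True by simp
  qed (simp add: normalized_indicator_def)
qed

lemma sum_normalized_indicator:
  assumes "is_clustering n K c" "k < K"
  shows "(\<Sum>i<n. normalized_indicator n c k i) = sqrt (real (cluster_size n c k))"
proof -
  obtain i where "i < n" "c i = k" using assms by (auto simp: is_clustering_def)
  then have pos: "0 < cluster_size n c k" using cluster_size_pos by blast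
  have "(\<Sum>i<n. normalized_indicator n c k i) = real (cluster_size n c k) / sqrt (real (cluster_size n c k))"
    by (simp add: normalized_indicator_def sum_over_cluster)
  also have "\<dots> = sqrt (real (cluster_size n c k))" using pos by (simp add: real_div_sqrt)
  finally show ?thesis .
qed

lemma normalized_indicator_expansion:
  assumes "is_clustering n K c"
    and const: "\<And>i j. i < n \<Longrightarrow> j < n \<Longrightarrow> c i = c j \<Longrightarrow> z i = z j" and j: "j < n"
  shows "(\<Sum>l<K. (\<Sum>i<n. z i * normalized_indicator n c l i) * normalized_indicator n c l j) = z j"
proof -
  let ?k = "c j" and ?s = "sqrt (real (cluster_size n c (c j)))"
  have pos: "0 < cluster_size n c ?k" using cluster_size_pos[OF j] .
  have k: "?k < K" using assms j unfolding is_clustering_def by blast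
  have "(\<Sum>l<K. (\<Sum>i<n. z i * normalized_indicator n c l i) * normalized_indicator n c l j)
      = (\<Sum>l<K. if l = ?k then (\<Sum>i<n. z i * normalized_indicator n c l i) / ?s else 0)"
    by (intro sum.cong) (auto simp: normalized_indicator_def)
  also have "\<dots> = (\<Sum>i<n. z i * normalized_indicator n c ?k i) / ?s"
    using k by simp
  also have "(\<Sum>i<n. z i * normalized_indicator n c ?k i) = (\<Sum>i<n. if c i = ?k then z j / ?s else 0)"
  proof (intro sum.cong refl)
    fix i assume "i \<in> {..<n}"
    then show "z i * normalized_indicator n c ?k i = (if c i = ?k then z j / ?s else 0)"
      using const[of i j] j by (simp add: normalized_indicator_def)
  qed
  also have "\<dots> = real (cluster_size n c ?k) * (z j / ?s)" by (rule sum_over_cluster)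
  finally show ?thesis using pos by simp
qed

lemma indicator_mat_in_indicator_mats:
  assumes "is_clustering n K c"
  shows "indicator_mat K n c \<in> indicator_mats K n"
proof -
  have "\<exists>!k. k < K \<and> indicator_mat K n c $$ (k,i) = 1" if "i < n" for i
    using assms that
    by (intro ex1I[of _ "c i"]) (auto simp: indicator_mat_def is_clustering_def split: if_splits)
  moreover have "\<exists>i<n. indicator_mat K n c $$ (k,i) = 1" if k: "k < K" for k
  proof -
    obtain i where "i < n" "c i = k" using assms k unfolding is_clustering_def by blast
    then show ?thesis using k by (auto simp: indicator_mat_def)
  qed
  ultimately show ?thesis unfolding indicator_mats_def by (auto simp: indicator_mat_def)
qed

lemma normalize_indicator_mat:
  "mat K n (\<lambda>(k,i). indicator_mat K n c $$ (k,i) / sqrt ((indicator_mat K n c * transpose_mat (indicator_mat K n c)) $$ (k,k)))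
     = normalized_indicator_mat K n c"
proof -
  have "(indicator_mat K n c * transpose_mat (indicator_mat K n c)) $$ (k,k) = real (cluster_size n c k)"
    if "k < K" for k
  proof -
    have "(indicator_mat K n c * transpose_mat (indicator_mat K n c)) $$ (k,k)
        = (\<Sum>i<n. if c i = k then 1 else 0)"
      using that by (simp add: indicator_mat_def scalar_prod_def lessThan_atLeast0 if_distrib cong: if_cong)
    then show ?thesis by (simp add: sum_over_cluster)
  qed
  then show ?thesis
    by (intro eq_matI) (auto simp: normalized_indicator_mat_def normalized_indicator_def indicator_mat_def)
qed

lemma indicator_mats_clustering:
  assumes "F \<in> indicator_mats K n"
  obtains c where "is_clustering n K c" "F = indicator_mat K n c"
proof -
  have F: "F \<in> carrier_mat K n" and F01: "\<forall>k<K. \<forall>i<n. F $$ (k,i) = 0 \<or> F $$ (k,i) = 1"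
    and unique: "\<forall>i<n. \<exists>!k. k < K \<and> F $$ (k,i) = 1" and nonempty: "\<forall>k<K. \<exists>i<n. F $$ (k,i) = 1"
    using assms unfolding indicator_mats_def by auto
  define c where "c i = (THE k. k < K \<and> F $$ (k,i) = 1)" for i
  have c: "c i < K \<and> F $$ (c i, i) = 1" if "i < n" for i
    using theI'[OF unique[rule_format, OF that]] unfolding c_def by blast
  have entry: "F $$ (k,i) = (if c i = k then 1 else 0)" if k: "k < K" and i: "i < n" for k i
  proof (cases "c i = k")
    case False
    have "F $$ (k,i) \<noteq> 1"
    proof
      assume one: "F $$ (k,i) = 1"
      have "c i = k" unfolding c_def
        using k one by (intro the1_equality[OF unique[rule_format, OF i]]) simp
      then show False using False by simp
    qed
    then have "F $$ (k,i) = 0" using F01[rule_format, OF k i] by simp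
    then show ?thesis using False by simp
  qed (use c[OF i] in simp)
  have onto: "\<exists>i<n. c i = k" if k: "k < K" for k
  proof -
    obtain i where "i < n" "F $$ (k,i) = 1" using nonempty k by blast
    then show ?thesis using entry[OF k] by (auto split: if_splits)
  qed
  have "is_clustering n K c" using c onto unfolding is_clustering_def by blast
  moreover have "F = indicator_mat K n c" using F entry by (intro eq_matI) (auto simp: indicator_mat_def)
  ultimately show ?thesis by (rule that)
qed

lemma norm_indicator_mats_eq:
  "norm_indicator_mats K n = normalized_indicator_mat K n ` {c. is_clustering n K c}"
proof (intro equalityI subsetI)
  fix H assume "H \<in> norm_indicator_mats K n"
  then obtain F where F: "F \<in> indicator_mats K n"
    and H: "H = mat K n (\<lambda>(k,i). F $$ (k,i) / sqrt ((F * transpose_mat F) $$ (k,k)))"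
    unfolding norm_indicator_mats_def by blast
  obtain c where c: "is_clustering n K c" and F_eq: "F = indicator_mat K n c"
    using indicator_mats_clustering[OF F] .
  have "H = normalized_indicator_mat K n c" unfolding H F_eq normalize_indicator_mat ..
  then show "H \<in> normalized_indicator_mat K n ` {c. is_clustering n K c}" using c by blast
next
  fix H assume "H \<in> normalized_indicator_mat K n ` {c. is_clustering n K c}"
  then obtain c where c: "is_clustering n K c" and H: "H = normalized_indicator_mat K n c" by blast
  show "H \<in> norm_indicator_mats K n"
    unfolding norm_indicator_mats_def H normalize_indicator_mat[symmetric]
    by (rule imageI) (rule indicator_mat_in_indicator_mats[OF c])
qed

lemma sqnorm_normalized_indicator:
  "is_clustering n K c \<Longrightarrow> k < K \<Longrightarrow> sqnorm n (normalized_indicator n c k) = 1"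
  using orthonormal_rowsD[OF normalized_indicator_orthonormal, of n K c k k]
  by (simp add: sqnorm_def power2_eq_square)

lemma clustering_of_quotient:
  assumes eq: "equiv UNIV R" and card: "card ({0..<n} // R) = K"
  obtains c where "is_clustering n K c" "\<And>i j. i < n \<Longrightarrow> j < n \<Longrightarrow> c i = c j \<longleftrightarrow> (i,j) \<in> R"
proof -
  have "finite ({0..<n} // R)" unfolding quotient_def by (intro finite_UN_I) auto
  then obtain g where g: "bij_betw g {0..<K} ({0..<n} // R)"
    using ex_bij_betw_nat_finite card by blast
  define c where "c i = inv_into {0..<K} g (R``{i})" for i
  have c: "c i < K \<and> g (c i) = R``{i}" if "i < n" for i
  proof -
    have "R``{i} \<in> g ` {0..<K}"
      using g that by (auto simp: bij_betw_def intro: quotientI)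
    then have "c i \<in> {0..<K}" "g (c i) = R``{i}"
      unfolding c_def by (rule inv_into_into, rule f_inv_into_f)
    then show ?thesis by simp
  qed
  have onto: "\<exists>i<n. c i = k" if k: "k < K" for k
  proof -
    have "g k \<in> {0..<n} // R" using g k by (auto simp: bij_betw_def)
    then obtain i where i: "i < n" "g k = R``{i}" by (auto elim: quotientE)
    have "c i = k" unfolding c_def i(2)[symmetric] using g k by (auto simp: bij_betw_def)
    with i show ?thesis by blast
  qed
  have same: "c i = c j \<longleftrightarrow> (i,j) \<in> R" if "i < n" "j < n" for i j
  proof -
    have "inj_on g {0..<K}" using g by (simp add: bij_betw_def)
    moreover have "c i \<in> {0..<K}" "c j \<in> {0..<K}" using c that by auto
    ultimately have "c i = c j \<longleftrightarrow> g (c i) = g (c j)" by (simp add: inj_on_eq_iff)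
    also have "\<dots> \<longleftrightarrow> R``{i} = R``{j}" using c[OF that(1)] c[OF that(2)] by (simp only:)
    also have "\<dots> \<longleftrightarrow> (i,j) \<in> R" by (rule eq_equiv_class_iff[OF eq]) auto
    finally show ?thesis .
  qed
  have "is_clustering n K c" using c onto unfolding is_clustering_def by blast
  then show ?thesis using same by (rule that)
qed

text \<open>Otherwise the coarser clustering \<open>c\<close> would have fewer than \<open>K\<close> clusters.\<close>

lemma clustering_refinement_eq:
  assumes c: "is_clustering n K c" and c': "is_clustering n K c'"
    and refines: "\<And>i j. i < n \<Longrightarrow> j < n \<Longrightarrow> c' i = c' j \<Longrightarrow> c i = c j"
    and ij: "i < n" "j < n" "c i = c j"
  shows "c' i = c' j"
proof -
  define \<phi> where "\<phi> k = c (SOME i. i < n \<and> c' i = k)" for k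
  have \<phi>: "\<phi> (c' i) = c i" if "i < n" for i
  proof -
    have "\<exists>i'. i' < n \<and> c' i' = c' i" using that by blast
    then have "(SOME i'. i' < n \<and> c' i' = c' i) < n \<and> c' (SOME i'. i' < n \<and> c' i' = c' i) = c' i"
      by (rule someI_ex)
    then show ?thesis unfolding \<phi>_def using refines that by blast
  qed
  have "{..<K} \<subseteq> \<phi> ` {..<K}"
  proof
    fix k assume "k \<in> {..<K}"
    then obtain i where i: "i < n" "c i = k" using c unfolding is_clustering_def by auto
    then have "c' i \<in> {..<K}" using c' unfolding is_clustering_def by auto
    with i show "k \<in> \<phi> ` {..<K}" using \<phi> by (intro image_eqI[of _ _ "c' i"]) auto
  qed
  then have "card {..<K} \<le> card (\<phi> ` {..<K})" by (intro card_mono) auto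
  then have "card (\<phi> ` {..<K}) = card {..<K}"
    using card_image_le[of "{..<K}" \<phi>] by simp
  then have "inj_on \<phi> {..<K}" by (intro eq_card_imp_inj_on) auto
  moreover have "\<phi> (c' i) = \<phi> (c' j)" using \<phi> ij by simp
  moreover have "c' i \<in> {..<K}" "c' j \<in> {..<K}" using c' ij(1,2) unfolding is_clustering_def by auto
  ultimately show ?thesis by (rule inj_onD)
qed

text \<open>The clusterwise constant vectors form a \<open>K\<close>-dimensional space, so fewer than \<open>K\<close> linear
  conditions leave a nonzero one.\<close>

lemma exists_cluster_constant_orthogonal:
  fixes f :: "nat \<Rightarrow> nat \<Rightarrow> real"
  assumes c: "is_clustering n K c" and m: "Suc m < K"
  shows "\<exists>d. (\<exists>i<n. d (c i) \<noteq> 0) \<and> (\<Sum>i<n. d (c i)) = 0 \<and> (\<forall>e<m. (\<Sum>i<n. d (c i) * f e i) = 0)"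
proof -
  define coef where "coef e k =
    (if e < m then (\<Sum>i<n. if c i = k then f e i else 0) else real (cluster_size n c k))" for e k
  obtain d where d: "\<exists>k\<in>{..<K}. d k \<noteq> 0" "\<forall>e<Suc m. (\<Sum>k\<in>{..<K}. coef e k * d k) = 0"
    using homogeneous_system_nontrivial_solution[of "{..<K}" "Suc m" coef] m by auto
  have expand: "(\<Sum>i<n. d (c i) * g i) = (\<Sum>k<K. d k * (\<Sum>i<n. if c i = k then g i else 0))" for g
    by (rule sum_by_clusters[OF c])
  have "(\<Sum>i<n. d (c i) * f e i) = 0" if e: "e < m" for e
  proof -
    have "(\<Sum>i<n. d (c i) * f e i) = (\<Sum>k<K. coef e k * d k)"
      using e by (simp add: expand coef_def mult.commute)
    also have "\<dots> = 0" using d(2) e by simp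
    finally show ?thesis .
  qed
  moreover have "(\<Sum>i<n. d (c i)) = 0"
  proof -
    have "(\<Sum>i<n. d (c i)) = (\<Sum>k<K. coef m k * d k)"
      using expand[of "\<lambda>_. 1"] by (simp add: coef_def sum_over_cluster mult.commute)
    also have "\<dots> = 0" using d(2) by simp
    finally show ?thesis .
  qed
  moreover have "\<exists>i<n. d (c i) \<noteq> 0"
    using d(1) c unfolding is_clustering_def by auto
  ultimately show ?thesis by blast
qed

lemma index_mult_mat_sum:
  assumes "A \<in> carrier_mat m k" "B \<in> carrier_mat k n" "i < m" "j < n"
  shows "(A * B) $$ (i,j) = (\<Sum>a<k. A $$ (i,a) * B $$ (a,j))"
  using assms by (simp add: scalar_prod_def lessThan_atLeast0)

lemma orthonormal_rows_of_mat:
  assumes "V \<in> carrier_mat r n" "V * transpose_mat V = 1\<^sub>m r"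
  shows "orthonormal_rows r n (\<lambda>a i. V $$ (a,i))"
  unfolding orthonormal_rows_def
proof (intro allI impI)
  fix a b assume "a < r" "b < r"
  then have "(V * transpose_mat V) $$ (a,b) = (\<Sum>i<n. V $$ (a,i) * V $$ (b,i))"
    using assms by (subst index_mult_mat_sum[of _ r n _ r]) auto
  then show "(\<Sum>i<n. V $$ (a,i) * V $$ (b,i)) = (if a = b then 1 else 0)"
    using assms \<open>a < r\<close> \<open>b < r\<close> by simp
qed

lemma orthonormal_cols_of_mat:
  assumes "U \<in> carrier_mat p r" "transpose_mat U * U = 1\<^sub>m r"
  shows "orthonormal_rows r p (\<lambda>a l. U $$ (l,a))"
  unfolding orthonormal_rows_def
proof (intro allI impI)
  fix a b assume "a < r" "b < r"
  then have "(transpose_mat U * U) $$ (a,b) = (\<Sum>l<p. U $$ (l,a) * U $$ (l,b))"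
    using assms by (subst index_mult_mat_sum[of _ r p _ r]) auto
  then show "(\<Sum>l<p. U $$ (l,a) * U $$ (l,b)) = (if a = b then 1 else 0)"
    using assms \<open>a < r\<close> \<open>b < r\<close> by simp
qed

lemma orthonormal_rows_eq_rotation_normalized_indicator:
  assumes c: "is_clustering n K c" and z: "orthonormal_rows K n z"
    and const: "\<And>k i j. k < K \<Longrightarrow> i < n \<Longrightarrow> j < n \<Longrightarrow> c i = c j \<Longrightarrow> z k i = z k j"
  shows "\<exists>R \<in> carrier_mat K K. transpose_mat R * R = 1\<^sub>m K
           \<and> mat K n (\<lambda>(k,i). z k i) = R * normalized_indicator_mat K n c"
proof -
  let ?h = "normalized_indicator n c"
  define R where "R = mat K K (\<lambda>(k,l). \<Sum>i<n. z k i * ?h l i)"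
  have R: "R \<in> carrier_mat K K" by (simp add: R_def)
  have H: "normalized_indicator_mat K n c \<in> carrier_mat K n" by (simp add: normalized_indicator_mat_def)
  have expand: "(\<Sum>l<K. (\<Sum>i<n. z k i * ?h l i) * ?h l j) = z k j" if "k < K" "j < n" for k j
    by (rule normalized_indicator_expansion[OF c _ that(2)], rule const[OF that(1)])
  have Z: "mat K n (\<lambda>(k,i). z k i) = R * normalized_indicator_mat K n c"
  proof (rule eq_matI)
    fix k j assume "k < dim_row (R * normalized_indicator_mat K n c)" "j < dim_col (R * normalized_indicator_mat K n c)"
    then have kj: "k < K" "j < n" using R H by auto
    have "(R * normalized_indicator_mat K n c) $$ (k,j)
        = (\<Sum>l<K. R $$ (k,l) * normalized_indicator_mat K n c $$ (l,j))"
      by (rule index_mult_mat_sum[OF R H kj])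
    also have "\<dots> = (\<Sum>l<K. (\<Sum>i<n. z k i * ?h l i) * ?h l j)"
      using kj by (simp add: R_def normalized_indicator_mat_def)
    finally show "mat K n (\<lambda>(k,i). z k i) $$ (k,j) = (R * normalized_indicator_mat K n c) $$ (k,j)"
      using kj expand by simp
  qed (use R H in auto)
  have RRt: "R * transpose_mat R = 1\<^sub>m K"
  proof (rule eq_matI)
    fix k k' assume "k < dim_row (1\<^sub>m K)" "k' < dim_col (1\<^sub>m K)"
    then have kk: "k < K" "k' < K" by auto
    let ?X = "\<lambda>l. \<Sum>i<n. z k i * ?h l i"
    have "(R * transpose_mat R) $$ (k,k') = (\<Sum>l<K. R $$ (k,l) * transpose_mat R $$ (l,k'))"
      by (rule index_mult_mat_sum[OF R _ kk]) (use R in simp)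
    also have "\<dots> = (\<Sum>l<K. ?X l * (\<Sum>j<n. z k' j * ?h l j))"
      using kk by (simp add: R_def)
    also have "\<dots> = (\<Sum>j<n. z k' j * (\<Sum>l<K. ?X l * ?h l j))"
      by (simp add: sum_distrib_left sum.swap[of _ "{..<n}"] mult.left_commute)
    also have "\<dots> = (\<Sum>j<n. z k' j * z k j)"
      using kk expand by (intro sum.cong refl) simp
    also have "\<dots> = (if k' = k then 1 else 0)" using z kk by (simp add: orthonormal_rowsD)
    finally show "(R * transpose_mat R) $$ (k,k') = 1\<^sub>m K $$ (k,k')" using kk by auto
  qed (use R in auto)
  have "transpose_mat R * R = 1\<^sub>m K"
    by (rule mat_mult_left_right_inverse[OF R _ RRt]) (use R in auto)
  with R Z show ?thesis by blast
qed

lemma fro2_diff_mult: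
  assumes "A \<in> carrier_mat p n" "D \<in> carrier_mat p K"
  shows "fro2 (A - D * mat K n (\<lambda>(k,i). x k i))
           = (\<Sum>l<p. sqnorm n (\<lambda>i. A $$ (l,i) - (\<Sum>k<K. D $$ (l,k) * x k i)))"
  using assms unfolding fro2_def sqnorm_def
  by (auto simp: scalar_prod_def lessThan_atLeast0 intro!: sum.cong)

section \<open>K-means for a centered data matrix\<close>

locale centered_matrix =
  fixes A :: "real mat" and p n :: nat
  assumes carrier: "A \<in> carrier_mat p n"
    and centered: "A *\<^sub>v vec n (\<lambda>_. 1) = 0\<^sub>v p"
    and nonzero: "A \<noteq> 0\<^sub>m p n"
begin

definition gram :: "nat \<Rightarrow> nat \<Rightarrow> real" where
  "gram i j = (\<Sum>l<p. A $$ (l,i) * A $$ (l,j))"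

definition image_sqnorm :: "(nat \<Rightarrow> real) \<Rightarrow> real" where
  "image_sqnorm x = (\<Sum>l<p. (\<Sum>i<n. A $$ (l,i) * x i)^2)"

abbreviation weight :: "nat \<Rightarrow> nat \<Rightarrow> real" where
  "weight i j \<equiv> W_of A $$ (i,j)"

lemma row_sum_zero: "l < p \<Longrightarrow> (\<Sum>i<n. A $$ (l,i)) = 0"
proof -
  assume l: "l < p"
  have "(\<Sum>i<n. A $$ (l,i)) = (A *\<^sub>v vec n (\<lambda>_. 1)) $ l"
    using carrier l by (simp add: scalar_prod_def lessThan_atLeast0)
  also have "\<dots> = 0" using l by (simp add: centered)
  finally show ?thesis .
qed

lemma gram_row_sum_zero: "(\<Sum>j<n. gram i j) = 0"
proof -
  have "(\<Sum>j<n. gram i j) = (\<Sum>l<p. A $$ (l,i) * (\<Sum>j<n. A $$ (l,j)))"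
    unfolding gram_def by (subst sum.swap) (simp add: sum_distrib_left)
  then show ?thesis by (simp add: row_sum_zero)
qed

lemma image_sqnorm_eq_quad_form: "image_sqnorm x = quad_form n gram x"
proof -
  have "image_sqnorm x = (\<Sum>l<p. \<Sum>i<n. \<Sum>j<n. A $$ (l,i) * A $$ (l,j) * x i * x j)"
    by (simp add: image_sqnorm_def power2_eq_square sum_product algebra_simps)
  also have "\<dots> = (\<Sum>i<n. \<Sum>l<p. \<Sum>j<n. A $$ (l,i) * A $$ (l,j) * x i * x j)"
    by (rule sum.swap)
  also have "\<dots> = (\<Sum>i<n. \<Sum>j<n. \<Sum>l<p. A $$ (l,i) * A $$ (l,j) * x i * x j)"
    by (simp add: sum.swap[of _ "{..<p}"])
  also have "\<dots> = quad_form n gram x"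
    by (simp add: quad_form_def gram_def sum_distrib_right)
  finally show ?thesis .
qed

lemma beta_of_eq: "beta_of A = - Min {gram i j | i j. i < n \<and> j < n}"
proof -
  have entry: "(transpose_mat A * A) $$ (i,j) = gram i j" if "i < n" "j < n" for i j
    using carrier that by (subst index_mult_mat_sum[of _ n p _ n]) (auto simp: gram_def)
  have "{(transpose_mat A * A) $$ (i,j) | i j. i < dim_col A \<and> j < dim_col A}
      = {gram i j | i j. i < n \<and> j < n}"
  proof (intro equalityI subsetI)
    fix x assume "x \<in> {(transpose_mat A * A) $$ (i,j) | i j. i < dim_col A \<and> j < dim_col A}"
    then obtain i j where "x = (transpose_mat A * A) $$ (i,j)" "i < n" "j < n" using carrier by auto
    then show "x \<in> {gram i j | i j. i < n \<and> j < n}" using entry by blast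
  next
    fix x assume "x \<in> {gram i j | i j. i < n \<and> j < n}"
    then obtain i j where "x = gram i j" "i < n" "j < n" by blast
    then show "x \<in> {(transpose_mat A * A) $$ (i,j) | i j. i < dim_col A \<and> j < dim_col A}"
      using entry carrier by (metis (mono_tags, lifting) carrier_matD(2) mem_Collect_eq)
  qed
  then show ?thesis unfolding beta_of_def by simp
qed

lemma finite_gram_values: "finite {gram i j | i j. i < n \<and> j < n}"
  by (rule finite_image_set2) auto

lemma gram_ge_neg_beta:
  assumes "i < n" "j < n"
  shows "- beta_of A \<le> gram i j"
proof -
  have "gram i j \<in> {gram i j | i j. i < n \<and> j < n}" using assms by blast
  then show ?thesis unfolding beta_of_eq using Min_le[OF finite_gram_values] by simp
qed

lemma exists_nonzero_entry: "\<exists>l<p. \<exists>i<n. A $$ (l,i) \<noteq> 0"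
proof (rule ccontr)
  assume "\<not> ?thesis"
  then have "A = 0\<^sub>m p n" using carrier by (intro eq_matI) auto
  with nonzero show False ..
qed

lemma n_pos: "0 < n"
  using exists_nonzero_entry by auto

text \<open>A nonzero column has positive squared norm on the diagonal of the Gram matrix, while its
  row of the Gram matrix sums to zero; so some Gram entry is negative.\<close>

lemma beta_pos: "0 < beta_of A"
proof -
  obtain l i where li: "l < p" "i < n" "A $$ (l,i) \<noteq> 0"
    using exists_nonzero_entry by blast
  have "(A $$ (l,i))^2 \<le> (\<Sum>l<p. (A $$ (l,i))^2)"
    by (rule member_le_sum) (use li in auto)
  moreover have "0 < (A $$ (l,i))^2" using li by simp
  ultimately have diag: "0 < gram i i" by (simp add: gram_def power2_eq_square)
  have "\<exists>j<n. gram i j < 0"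
  proof (rule ccontr)
    assume "\<not> ?thesis"
    then have "\<And>j. j \<in> {..<n} \<Longrightarrow> 0 \<le> gram i j" by auto
    then have "\<forall>j\<in>{..<n}. gram i j = 0"
      using gram_row_sum_zero[of i] sum_nonneg_eq_0_iff[OF finite_lessThan] by blast
    then show False using diag li by simp
  qed
  then obtain j where "j < n" "gram i j < 0" by blast
  moreover have "- beta_of A \<le> gram i j" using gram_ge_neg_beta \<open>j < n\<close> li by blast
  ultimately show ?thesis by simp
qed

lemma weight_eq: "i < n \<Longrightarrow> j < n \<Longrightarrow> weight i j = beta_of A + gram i j"
proof -
  assume ij: "i < n" "j < n"
  have At: "A_tilde A \<in> carrier_mat (Suc p) n" using carrier by (simp add: A_tilde_def)
  have "weight i j = (\<Sum>t<Suc p. A_tilde A $$ (t,i) * A_tilde A $$ (t,j))"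
    unfolding W_of_def using At ij by (subst index_mult_mat_sum[of _ n "Suc p" _ n]) auto
  also have "\<dots> = A_tilde A $$ (0,i) * A_tilde A $$ (0,j)
      + (\<Sum>l<p. A_tilde A $$ (Suc l,i) * A_tilde A $$ (Suc l,j))"
    by (simp only: sum.lessThan_Suc_shift)
  also have "\<dots> = sqrt (beta_of A) * sqrt (beta_of A) + gram i j"
    using carrier ij by (simp add: A_tilde_def gram_def)
  finally show ?thesis using beta_pos by simp
qed

sublocale regular_weights n weight "beta_of A * real n"
proof
  fix i j assume ij: "i < n" "j < n"
  show "weight i j = weight j i" using ij by (simp add: weight_eq gram_def mult.commute)
  show "0 \<le> weight i j" using ij gram_ge_neg_beta[OF ij] by (simp add: weight_eq)
next
  fix i assume "i < n"
  then show "(\<Sum>j<n. weight i j) = beta_of A * real n"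
    using gram_row_sum_zero[of i] by (simp add: weight_eq sum.distrib)
qed

lemma quad_form_weight: "quad_form n weight x = image_sqnorm x + beta_of A * (\<Sum>i<n. x i)^2"
proof -
  have "quad_form n weight x = (\<Sum>i<n. \<Sum>j<n. (beta_of A + gram i j) * x i * x j)"
    unfolding quad_form_def by (intro sum.cong refl) (simp add: weight_eq)
  also have "\<dots> = quad_form n gram x + beta_of A * (\<Sum>i<n. x i)^2"
    by (simp add: quad_form_def power2_eq_square sum_product algebra_simps sum.distrib sum_distrib_left)
  finally show ?thesis by (simp add: image_sqnorm_eq_quad_form)
qed

lemma dim_row_W: "dim_row (W_of A) = n"
  using carrier by (simp add: W_of_def A_tilde_def)

lemma kmeans_objective:
  assumes c: "is_clustering n K c" and D: "D \<in> carrier_mat p K"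
  shows "fro2 (A - D * normalized_indicator_mat K n c)
    = (\<Sum>l<p. sqnorm n (\<lambda>i. A $$ (l,i))) - (\<Sum>k<K. image_sqnorm (normalized_indicator n c k))
      + (\<Sum>l<p. \<Sum>k<K. (D $$ (l,k) - (\<Sum>i<n. A $$ (l,i) * normalized_indicator n c k i))^2)"
proof -
  let ?h = "normalized_indicator n c"
  have orth: "orthonormal_rows K n ?h" by (rule normalized_indicator_orthonormal[OF c])
  have "fro2 (A - D * normalized_indicator_mat K n c)
      = (\<Sum>l<p. sqnorm n (\<lambda>i. A $$ (l,i) - (\<Sum>k<K. D $$ (l,k) * ?h k i)))"
    unfolding normalized_indicator_mat_def by (rule fro2_diff_mult[OF carrier D])
  also have "\<dots> = (\<Sum>l<p. sqnorm n (\<lambda>i. A $$ (l,i)) - (\<Sum>k<K. (\<Sum>i<n. A $$ (l,i) * ?h k i)^2)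
      + (\<Sum>k<K. (D $$ (l,k) - (\<Sum>i<n. A $$ (l,i) * ?h k i))^2))"
    by (intro sum.cong refl orthonormal_rows_residual[OF orth])
  also have "\<dots> = (\<Sum>l<p. sqnorm n (\<lambda>i. A $$ (l,i))) - (\<Sum>l<p. \<Sum>k<K. (\<Sum>i<n. A $$ (l,i) * ?h k i)^2)
      + (\<Sum>l<p. \<Sum>k<K. (D $$ (l,k) - (\<Sum>i<n. A $$ (l,i) * ?h k i))^2)"
    by (simp add: sum.distrib sum_subtractf)
  also have "(\<Sum>l<p. \<Sum>k<K. (\<Sum>i<n. A $$ (l,i) * ?h k i)^2) = (\<Sum>k<K. image_sqnorm (?h k))"
    unfolding image_sqnorm_def by (rule sum.swap)
  finally show ?thesis .
qed

lemma sum_image_sqnorm_normalized_indicator: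
  assumes c: "is_clustering n K c"
  shows "(\<Sum>k<K. image_sqnorm (normalized_indicator n c k))
    = (\<Sum>k<K. quad_form n weight (normalized_indicator n c k)) - beta_of A * real n"
proof -
  have "(\<Sum>k<K. image_sqnorm (normalized_indicator n c k))
      = (\<Sum>k<K. quad_form n weight (normalized_indicator n c k) - beta_of A * real (cluster_size n c k))"
    using c by (intro sum.cong refl) (simp add: quad_form_weight sum_normalized_indicator)
  also have "\<dots> = (\<Sum>k<K. quad_form n weight (normalized_indicator n c k)) - beta_of A * real n"
    using sum_cluster_size[OF c] by (simp add: sum_subtractf sum_distrib_left[symmetric])
  finally show ?thesis .
qed

text \<open>The best centers for a clustering are its cluster means \<open>D = A H\<^sup>T\<close>, for which the
  K-means objective is \<open>\<parallel>A\<parallel>\<^sup>2 - \<Sum>\<^sub>k \<parallel>A h\<^sub>k\<parallel>\<^sup>2\<close>.\<close>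

lemma kmeans_optimal_image_sqnorm:
  assumes c: "is_clustering n K c" and c': "is_clustering n K c'"
    and opt: "\<exists>D0 \<in> carrier_mat p K. \<forall>D \<in> carrier_mat p K. \<forall>X \<in> norm_indicator_mats K n.
                fro2 (A - D0 * normalized_indicator_mat K n c) \<le> fro2 (A - D * X)"
  shows "(\<Sum>k<K. image_sqnorm (normalized_indicator n c' k)) \<le> (\<Sum>k<K. image_sqnorm (normalized_indicator n c k))"
proof -
  obtain D0 where D0: "D0 \<in> carrier_mat p K"
    and le: "\<And>D X. D \<in> carrier_mat p K \<Longrightarrow> X \<in> norm_indicator_mats K n \<Longrightarrow>
               fro2 (A - D0 * normalized_indicator_mat K n c) \<le> fro2 (A - D * X)"
    using opt by blast
  define D where "D = mat p K (\<lambda>(l,k). \<Sum>i<n. A $$ (l,i) * normalized_indicator n c' k i)"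
  have D: "D \<in> carrier_mat p K" by (simp add: D_def)
  have "normalized_indicator_mat K n c' \<in> norm_indicator_mats K n"
    using c' by (simp add: norm_indicator_mats_eq)
  then have "fro2 (A - D0 * normalized_indicator_mat K n c) \<le> fro2 (A - D * normalized_indicator_mat K n c')"
    using D by (rule le[rotated])
  moreover have "fro2 (A - D * normalized_indicator_mat K n c')
      = (\<Sum>l<p. sqnorm n (\<lambda>i. A $$ (l,i))) - (\<Sum>k<K. image_sqnorm (normalized_indicator n c' k))"
    using kmeans_objective[OF c' D] by (simp add: D_def)
  moreover have "(\<Sum>l<p. sqnorm n (\<lambda>i. A $$ (l,i))) - (\<Sum>k<K. image_sqnorm (normalized_indicator n c k))
      \<le> fro2 (A - D0 * normalized_indicator_mat K n c)"
    using kmeans_objective[OF c D0] by (simp add: sum_nonneg)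
  ultimately show ?thesis by linarith
qed

lemma kmeans_optimal_edge_constant:
  assumes c: "is_clustering n K c" and c': "is_clustering n K c'"
    and opt: "\<exists>D0 \<in> carrier_mat p K. \<forall>D \<in> carrier_mat p K. \<forall>X \<in> norm_indicator_mats K n.
                fro2 (A - D0 * normalized_indicator_mat K n c) \<le> fro2 (A - D * X)"
    and c'_const: "\<And>i j. i < n \<Longrightarrow> j < n \<Longrightarrow> 0 < weight i j \<Longrightarrow> c' i = c' j"
    and ij: "i < n" "j < n" "0 < weight i j"
  shows "c i = c j"
proof -
  let ?B = "beta_of A * real n" and ?Q = "\<lambda>c k. quad_form n weight (normalized_indicator n c k)"
  have Q_le: "?Q c k \<le> ?B" if "k < K" for k
    using quad_form_le[of "normalized_indicator n c k"] sqnorm_normalized_indicator[OF c that] by simp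
  have "?Q c' k = ?B" if "k < K" for k
    using quad_form_eq_iff[of "normalized_indicator n c' k"] sqnorm_normalized_indicator[OF c' that]
      c'_const by (auto simp: normalized_indicator_def)
  then have "real K * ?B \<le> (\<Sum>k<K. ?Q c k)"
    using kmeans_optimal_image_sqnorm[OF c c' opt]
    by (simp add: sum_image_sqnorm_normalized_indicator[OF c] sum_image_sqnorm_normalized_indicator[OF c'])
  then have "?Q c (c i) = ?B"
    using c ij(1) by (intro sum_le_bound_eq[OF Q_le]) (auto simp: is_clustering_def)
  moreover have "c i < K" using c ij(1) by (simp add: is_clustering_def)
  ultimately have "quad_form n weight (normalized_indicator n c (c i))
      = ?B * sqnorm n (normalized_indicator n c (c i))"
    by (simp add: sqnorm_normalized_indicator[OF c])
  then have "normalized_indicator n c (c i) i = normalized_indicator n c (c i) j"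
    using ij unfolding quad_form_eq_iff by blast
  moreover have "0 < cluster_size n c (c i)" using cluster_size_pos[OF ij(1)] .
  ultimately show ?thesis by (auto simp: normalized_indicator_def split: if_splits)
qed

lemma kmeans_clusters_eq_components:
  assumes c: "is_clustering n K c"
    and opt: "\<exists>D0 \<in> carrier_mat p K. \<forall>D \<in> carrier_mat p K. \<forall>X \<in> norm_indicator_mats K n.
                fro2 (A - D0 * normalized_indicator_mat K n c) \<le> fro2 (A - D * X)"
    and ideal: "ideal_graph (W_of A) K" and ij: "i < n" "j < n"
  shows "c i = c j \<longleftrightarrow> (i,j) \<in> same_component n weight"
proof -
  obtain c' where c': "is_clustering n K c'"
    and c'_comp: "\<And>i j. i < n \<Longrightarrow> j < n \<Longrightarrow> c' i = c' j \<longleftrightarrow> (i,j) \<in> same_component n weight"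
    using ideal equiv_same_component unfolding ideal_graph_iff_components dim_row_W
    by (blast intro: clustering_of_quotient)
  have c'_const: "c' i = c' j" if "i < n" "j < n" "0 < weight i j" for i j
    using that c'_comp by (auto simp: same_component_def graph_edges_def)
  have c_comp: "c i = c j" if "(i,j) \<in> same_component n weight" for i j
    using that kmeans_optimal_edge_constant[OF c c' opt c'_const] by (rule same_component_edge_constant)
  show ?thesis
  proof
    assume "c i = c j"
    then have "c' i = c' j"
      using clustering_refinement_eq[OF c c' _ ij] c'_comp c_comp by blast
    then show "(i,j) \<in> same_component n weight" using c'_comp ij by blast
  qed (rule c_comp)
qed

end

section \<open>The leading right singular vectors\<close>

locale centered_svd = centered_matrix +
  fixes r :: nat and U S V :: "real mat"
  assumes U_carrier: "U \<in> carrier_mat p r" and S_carrier: "S \<in> carrier_mat r r"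
    and V_carrier: "V \<in> carrier_mat r n"
    and U_orthonormal: "transpose_mat U * U = 1\<^sub>m r"
    and V_orthonormal: "V * transpose_mat V = 1\<^sub>m r"
    and S_diagonal: "\<And>i j. i < r \<Longrightarrow> j < r \<Longrightarrow> i \<noteq> j \<Longrightarrow> S $$ (i,j) = 0"
    and S_pos: "\<And>i. i < r \<Longrightarrow> 0 < S $$ (i,i)"
    and S_decreasing: "\<And>i j. i \<le> j \<Longrightarrow> j < r \<Longrightarrow> S $$ (j,j) \<le> S $$ (i,i)"
    and svd: "A = U * S * V"
begin

lemma entry_svd: "l < p \<Longrightarrow> i < n \<Longrightarrow> A $$ (l,i) = (\<Sum>k<r. U $$ (l,k) * S $$ (k,k) * V $$ (k,i))"
proof -
  assume l: "l < p" and i: "i < n"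
  have US: "U * S \<in> carrier_mat p r" using U_carrier S_carrier by auto
  have "A $$ (l,i) = (\<Sum>k<r. (U * S) $$ (l,k) * V $$ (k,i))"
    unfolding svd by (rule index_mult_mat_sum[OF US V_carrier l i])
  also have "\<dots> = (\<Sum>k<r. U $$ (l,k) * S $$ (k,k) * V $$ (k,i))"
  proof (intro sum.cong refl)
    fix k assume k: "k \<in> {..<r}"
    have "(U * S) $$ (l,k) = (\<Sum>k'<r. U $$ (l,k') * S $$ (k',k))"
      using k by (intro index_mult_mat_sum[OF U_carrier S_carrier l]) simp
    also have "\<dots> = (\<Sum>k'<r. if k' = k then U $$ (l,k) * S $$ (k,k) else 0)"
      using k S_diagonal by (intro sum.cong refl) auto
    finally show "(U * S) $$ (l,k) * V $$ (k,i) = U $$ (l,k) * S $$ (k,k) * V $$ (k,i)"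
      using k by simp
  qed
  finally show ?thesis .
qed

lemma image_coordinate_svd:
  "l < p \<Longrightarrow> (\<Sum>i<n. A $$ (l,i) * y i) = (\<Sum>k<r. (S $$ (k,k) * (\<Sum>i<n. y i * V $$ (k,i))) * U $$ (l,k))"
  by (simp add: entry_svd sum_distrib_right sum_distrib_left sum.swap[of _ "{..<r}"] algebra_simps)

lemma image_sqnorm_svd: "image_sqnorm y = (\<Sum>k<r. (S $$ (k,k))^2 * (\<Sum>i<n. y i * V $$ (k,i))^2)"
proof -
  have "image_sqnorm y = (\<Sum>l<p. (\<Sum>k<r. (S $$ (k,k) * (\<Sum>i<n. y i * V $$ (k,i))) * U $$ (l,k))^2)"
    unfolding image_sqnorm_def by (intro sum.cong refl) (simp add: image_coordinate_svd)
  also have "\<dots> = (\<Sum>k<r. (S $$ (k,k) * (\<Sum>i<n. y i * V $$ (k,i)))^2)"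
    using orthonormal_rows_sqnorm_combination[OF orthonormal_cols_of_mat[OF U_carrier U_orthonormal]]
    by (simp add: sqnorm_def)
  finally show ?thesis by (simp add: power_mult_distrib)
qed

lemma right_singular_vector_sum_zero:
  assumes k: "k < r"
  shows "(\<Sum>i<n. V $$ (k,i)) = 0"
proof -
  have "0 = (\<Sum>l<p. U $$ (l,k) * (\<Sum>i<n. A $$ (l,i)))" by (simp add: row_sum_zero)
  also have "\<dots> = (\<Sum>l<p. U $$ (l,k) * (\<Sum>k'<r. (S $$ (k',k') * (\<Sum>i<n. V $$ (k',i))) * U $$ (l,k')))"
    using image_coordinate_svd[of _ "\<lambda>_. 1"] by (intro sum.cong refl) simp
  also have "\<dots> = S $$ (k,k) * (\<Sum>i<n. V $$ (k,i))"
    by (rule orthonormal_rows_coefficient[OF orthonormal_cols_of_mat[OF U_carrier U_orthonormal] k])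
  finally show ?thesis using S_pos[OF k] by simp
qed

lemma quad_form_right_singular_vector:
  assumes b: "b < r"
  shows "quad_form n weight (\<lambda>i. V $$ (b,i)) = (S $$ (b,b))^2"
proof -
  have V: "orthonormal_rows r n (\<lambda>k i. V $$ (k,i))" by (rule orthonormal_rows_of_mat[OF V_carrier V_orthonormal])
  have "image_sqnorm (\<lambda>i. V $$ (b,i)) = (\<Sum>k<r. if k = b then (S $$ (k,k))^2 else 0)"
    unfolding image_sqnorm_svd using b by (intro sum.cong refl) (simp add: orthonormal_rowsD[OF V])
  then show ?thesis using b by (simp add: quad_form_weight right_singular_vector_sum_zero)
qed

lemma sqnorm_right_singular_vector: "b < r \<Longrightarrow> sqnorm n (\<lambda>i. V $$ (b,i)) = 1"
  using orthonormal_rowsD[OF orthonormal_rows_of_mat[OF V_carrier V_orthonormal], of b b]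
  by (simp add: sqnorm_def power2_eq_square)

lemma singular_value_sq_le: "b < r \<Longrightarrow> (S $$ (b,b))^2 \<le> beta_of A * real n"
  using quad_form_le[of "\<lambda>i. V $$ (b,i)"]
  by (simp add: quad_form_right_singular_vector sqnorm_right_singular_vector)

lemma stacked_rows_orthonormal:
  assumes "K \<le> r + 1"
  shows "orthonormal_rows K n (\<lambda>k i. if k = 0 then 1 / sqrt (real n) else V $$ (k - 1, i))"
  unfolding orthonormal_rows_def
proof (intro allI impI)
  fix a b assume ab: "a < K" "b < K"
  have V: "orthonormal_rows r n (\<lambda>k i. V $$ (k,i))" by (rule orthonormal_rows_of_mat[OF V_carrier V_orthonormal])
  have ones: "(\<Sum>i<n. 1 / sqrt (real n) * (1 / sqrt (real n))) = 1"
    using n_pos by (simp add: real_sqrt_mult[symmetric])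
  show "(\<Sum>i<n. (if a = 0 then 1 / sqrt (real n) else V $$ (a - 1, i))
              * (if b = 0 then 1 / sqrt (real n) else V $$ (b - 1, i))) = (if a = b then 1 else 0)"
  proof (cases "a = 0"; cases "b = 0")
    assume "a \<noteq> 0" "b \<noteq> 0"
    then show ?thesis using ab assms orthonormal_rowsD[OF V, of "a - 1" "b - 1"] by auto
  qed (use ab assms ones right_singular_vector_sum_zero[of "a - 1"] right_singular_vector_sum_zero[of "b - 1"]
    in \<open>auto simp: sum_distrib_left[symmetric] sum_distrib_right[symmetric] sum_divide_distrib[symmetric]\<close>)
qed

lemma leading_singular_values_large:
  assumes c: "is_clustering n K c" and K: "2 \<le> K"
    and c_const: "\<And>i j. i < n \<Longrightarrow> j < n \<Longrightarrow> 0 < weight i j \<Longrightarrow> c i = c j"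
  shows "K - 2 < r \<and> beta_of A * real n \<le> (S $$ (K-2, K-2))^2"
proof (rule ccontr)
  assume neg: "\<not> ?thesis"
  let ?B = "beta_of A * real n"
  define m where "m = min r (K - 2)"
  have small: "(S $$ (k,k))^2 < ?B" if k: "k < r" "m \<le> k" for k
  proof -
    have "K - 2 < r" "K - 2 \<le> k" using k by (auto simp: m_def)
    then have "(S $$ (K-2, K-2))^2 < ?B" using neg by auto
    moreover have "(S $$ (k,k))^2 \<le> (S $$ (K-2, K-2))^2"
      using S_decreasing[of "K - 2" k] S_pos[of k] \<open>K - 2 \<le> k\<close> k(1) by (intro power_mono) auto
    ultimately show ?thesis by linarith
  qed
  have "Suc m < K" using K by (simp add: m_def)
  then obtain d where d: "\<exists>i<n. d (c i) \<noteq> 0" "(\<Sum>i<n. d (c i)) = 0"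
      and orth: "\<forall>e<m. (\<Sum>i<n. d (c i) * V $$ (e,i)) = 0"
    using exists_cluster_constant_orthogonal[OF c, of m "\<lambda>e i. V $$ (e,i)"] by blast
  define y where "y i = d (c i)" for i
  define t where "t k = (\<Sum>i<n. y i * V $$ (k,i))" for k
  have t_low: "t k = 0" if "k < m" for k using orth that by (simp add: t_def y_def)
  have y_pos: "0 < sqnorm n y"
  proof -
    obtain i where i: "i < n" "y i \<noteq> 0" using d(1) by (auto simp: y_def)
    have "(y i)^2 \<le> sqnorm n y" unfolding sqnorm_def by (rule member_le_sum) (use i in auto)
    moreover have "0 < (y i)^2" using i by simp
    ultimately show ?thesis by linarith
  qed
  have "quad_form n weight y = ?B * sqnorm n y"
    unfolding quad_form_eq_iff
  proof (intro allI impI)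
    fix i j assume "i < n" "j < n" "0 < weight i j"
    then show "y i = y j" unfolding y_def using c_const[of i j] by simp
  qed
  then have P: "(\<Sum>k<r. (S $$ (k,k))^2 * (t k)^2) = ?B * sqnorm n y"
    using d(2) by (simp add: quad_form_weight image_sqnorm_svd y_def t_def)
  have "(\<Sum>k<r. (t k)^2) \<le> sqnorm n y"
    unfolding t_def by (rule bessel_inequality[OF orthonormal_rows_of_mat[OF V_carrier V_orthonormal]])
  then have "?B * (\<Sum>k<r. (t k)^2) \<le> ?B * sqnorm n y"
    using beta_pos n_pos by (intro mult_left_mono) auto
  moreover have "(\<Sum>k<r. (?B - (S $$ (k,k))^2) * (t k)^2)
      = ?B * (\<Sum>k<r. (t k)^2) - (\<Sum>k<r. (S $$ (k,k))^2 * (t k)^2)"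
    by (simp add: left_diff_distrib sum_subtractf sum_distrib_left)
  ultimately have le0: "(\<Sum>k<r. (?B - (S $$ (k,k))^2) * (t k)^2) \<le> 0" using P by linarith
  have nonneg: "0 \<le> (?B - (S $$ (k,k))^2) * (t k)^2" if "k \<in> {..<r}" for k
    using that small[of k] t_low[of k] by (cases "k < m") auto
  then have "0 \<le> (\<Sum>k<r. (?B - (S $$ (k,k))^2) * (t k)^2)" by (rule sum_nonneg)
  then have "(\<Sum>k<r. (?B - (S $$ (k,k))^2) * (t k)^2) = 0" using le0 by linarith
  then have "\<forall>k\<in>{..<r}. (?B - (S $$ (k,k))^2) * (t k)^2 = 0"
    by (subst (asm) sum_nonneg_eq_0_iff) (use nonneg in auto)
  then have "t k = 0" if "k < r" for k
  proof (cases "k < m")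
    case False
    then have "?B - (S $$ (k,k))^2 \<noteq> 0" using small[of k] that by simp
    moreover have "(?B - (S $$ (k,k))^2) * (t k)^2 = 0" using \<open>\<forall>k\<in>{..<r}. _\<close> that by blast
    ultimately show ?thesis by simp
  qed (rule t_low)
  then have "?B * sqnorm n y = 0" using P by simp
  then show False using y_pos beta_pos n_pos by simp
qed

lemma leading_right_singular_vectors_edge_constant:
  assumes c: "is_clustering n K c" and K: "2 \<le> K"
    and c_const: "\<And>i j. i < n \<Longrightarrow> j < n \<Longrightarrow> 0 < weight i j \<Longrightarrow> c i = c j"
    and b: "b < K - 1" and ij: "i < n" "j < n" "0 < weight i j"
  shows "V $$ (b,i) = V $$ (b,j)"
proof -
  have large: "K - 2 < r" "beta_of A * real n \<le> (S $$ (K-2, K-2))^2"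
    using leading_singular_values_large[OF c K c_const] by auto
  have br: "b < r" using large b by linarith
  have "(S $$ (K-2, K-2))^2 \<le> (S $$ (b,b))^2"
    using S_decreasing[of b "K - 2"] S_pos[of "K - 2"] b large by (intro power_mono) auto
  then have "quad_form n weight (\<lambda>i. V $$ (b,i)) = beta_of A * real n * sqnorm n (\<lambda>i. V $$ (b,i))"
    using large singular_value_sq_le[OF br]
    by (simp add: quad_form_right_singular_vector[OF br] sqnorm_right_singular_vector[OF br])
  then show ?thesis using ij unfolding quad_form_eq_iff by blast
qed


lemma stacked_V_eq_rotation:
  assumes c: "is_clustering n K c" and K_lo: "2 \<le> K"
    and components: "\<And>i j. i < n \<Longrightarrow> j < n \<Longrightarrow> c i = c j \<longleftrightarrow> (i,j) \<in> same_component n weight"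
  shows "\<exists>R \<in> carrier_mat K K. transpose_mat R * R = 1\<^sub>m K
           \<and> stacked_V K n V = R * normalized_indicator_mat K n c"
proof -
  have c_const: "c i = c j" if "i < n" "j < n" "0 < weight i j" for i j
    using that components by (auto simp: same_component_def graph_edges_def)
  have "K - 2 < r"
    using leading_singular_values_large[OF c K_lo c_const] by blast
  define z where "z k i = (if k = 0 then 1 / sqrt (real n) else V $$ (k - 1, i))" for k i
  have z_const: "z k i = z k j" if "k < K" "i < n" "j < n" "c i = c j" for k i j
  proof -
    have ij: "(i,j) \<in> same_component n weight" using that components by blast
    show ?thesis
    proof (cases "k = 0")
      case False
      then have "k - 1 < K - 1" using that(1) by simp
      have "V $$ (k - 1, i) = V $$ (k - 1, j)"
        using ij by (rule same_component_edge_constant[where x = "\<lambda>i. V $$ (k - 1, i)"])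
          (rule leading_right_singular_vectors_edge_constant[OF c K_lo c_const \<open>k - 1 < K - 1\<close>])
      then show ?thesis by (simp add: z_def)
    qed (simp add: z_def)
  qed
  have orth: "orthonormal_rows K n z"
    unfolding z_def using \<open>K - 2 < r\<close> by (intro stacked_rows_orthonormal) simp
  obtain R where "R \<in> carrier_mat K K" "transpose_mat R * R = 1\<^sub>m K"
    and "mat K n (\<lambda>(k,i). z k i) = R * normalized_indicator_mat K n c"
    using orthonormal_rows_eq_rotation_normalized_indicator[OF c orth z_const] by blast
  moreover have "stacked_V K n V = mat K n (\<lambda>(k,i). z k i)"
    unfolding stacked_V_def z_def ..
  ultimately show ?thesis by auto
qed

end

theorem theorem3:
  fixes A U S V H :: "real mat" and p n K :: nat
  assumes A_dim: "A \<in> carrier_mat p n"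
    and A_one: "A *\<^sub>v vec n (\<lambda>_. 1) = 0\<^sub>v p"
    and svd: "compact_svd p n A U S V"
    and K_lo: "2 \<le> K" and K_hi: "K \<le> vec_space.rank p A + 1"
    and H_in: "H \<in> norm_indicator_mats K n"
    and H_opt: "\<exists>D0 \<in> carrier_mat p K. \<forall>D \<in> carrier_mat p K. \<forall>X \<in> norm_indicator_mats K n.
                  fro2 (A - D0 * H) \<le> fro2 (A - D * X)"
    and ideal: "ideal_graph (W_of A) K"
  shows "\<exists>R \<in> carrier_mat K K. transpose_mat R * R = 1\<^sub>m K \<and> stacked_V K n V = R * H"
proof -
  obtain r where "U \<in> carrier_mat p r" "S \<in> carrier_mat r r" "V \<in> carrier_mat r n"
    "transpose_mat U * U = 1\<^sub>m r" "V * transpose_mat V = 1\<^sub>m r"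
    "\<forall>i<r. \<forall>j<r. i \<noteq> j \<longrightarrow> S $$ (i,j) = 0" "\<forall>i<r. S $$ (i,i) > 0"
    "\<forall>i<r. \<forall>j<r. i \<le> j \<longrightarrow> S $$ (i,i) \<ge> S $$ (j,j)" "A = U * S * V"
    using svd unfolding compact_svd_def by blast
  \<comment> \<open>The rank bound only serves to exclude \<open>A = 0\<close>; \<open>K - 1 \<le> r\<close> follows from the graph condition.\<close>
  moreover have "A \<noteq> 0\<^sub>m p n"
  proof
    assume "A = 0\<^sub>m p n"
    then have "vec_space.rank p A = 0" by (simp add: vec_space.rank_0I)
    with K_lo K_hi show False by simp
  qed
  ultimately interpret centered_svd A p n r U S V
    using A_dim A_one by unfold_locales auto
  obtain c where c: "is_clustering n K c" and H: "H = normalized_indicator_mat K n c"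
    using H_in unfolding norm_indicator_mats_eq by blast
  have components: "c i = c j \<longleftrightarrow> (i,j) \<in> same_component n weight" if "i < n" "j < n" for i j
    using kmeans_clusters_eq_components[OF c H_opt[unfolded H] ideal that] .
  show ?thesis
    unfolding H by (rule stacked_V_eq_rotation[OF c K_lo components])
qed

end
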